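(* Let $d,s\geq 2$ be integers and let $t\geq 1$ be a real number with $t\leq d^{1/s}/s$. Let $G$ be a $K_{s,s}$-free graph of minimum degree at least $d$, and let $v$ be a vertex of $G$. Then fewer than $st$ vertices $u\in V(G)$ satisfy \[ |N(u)\cap N(v)|\geq \frac{4}{t}\,|N(v)|.\]
   Context: $N(x)$ denotes the neighbourhood of a vertex $x$ in $G$. A graph is $K_{s,s}$-free if it does not contain the complete bipartite graph $K_{s,s}$ as a (not necessarily induced) subgraph. *)

theory Defs
  imports Complex_Main
begin

definition simple_graph :: "'a set \<Rightarrow> ('a \<Rightarrow> 'a \<Rightarrow> bool) \<Rightarrow> bool" where
  "simple_graph V E \<longleftrightarrow> finite V \<and> (\<forall>x y. E x y \<longrightarrow> x \<in> V \<and> y \<in> V)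
     \<and> (\<forall>x y. E x y \<longrightarrow> E y x) \<and> (\<forall>x. \<not> E x x)"

definition nbhd :: "'a set \<Rightarrow> ('a \<Rightarrow> 'a \<Rightarrow> bool) \<Rightarrow> 'a \<Rightarrow> 'a set" where
  "nbhd V E x = {y \<in> V. E x y}"

definition min_degree_ge :: "'a set \<Rightarrow> ('a \<Rightarrow> 'a \<Rightarrow> bool) \<Rightarrow> nat \<Rightarrow> bool" where
  "min_degree_ge V E d \<longleftrightarrow> (\<forall>x\<in>V. card (nbhd V E x) \<ge> d)"

definition contains_Kss :: "'a set \<Rightarrow> ('a \<Rightarrow> 'a \<Rightarrow> bool) \<Rightarrow> nat \<Rightarrow> bool" where
  "contains_Kss V E s \<longleftrightarrow> (\<exists>A B. A \<subseteq> V \<and> B \<subseteq> V \<and> A \<inter> B = {} \<and>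
      card A = s \<and> card B = s \<and> (\<forall>a\<in>A. \<forall>b\<in>B. E a b))"

definition Kss_free :: "'a set \<Rightarrow> ('a \<Rightarrow> 'a \<Rightarrow> bool) \<Rightarrow> nat \<Rightarrow> bool" where
  "Kss_free V E s \<longleftrightarrow> \<not> contains_Kss V E s"

end

theory Submission
  imports Defs
begin

text \<open>Let \<open>N = N(v)\<close>, \<open>n = |N|\<close>, let \<open>U\<close> be the set of vertices counted and suppose
  \<open>k = |U| \<ge> s t\<close>. Counting edges between \<open>N\<close> and \<open>U\<close>, the numbers \<open>x\<^sub>w = |N(w) \<inter> U|\<close>
  (\<open>w \<in> N\<close>) have average at least \<open>4k/t\<close>. Counting pairs \<open>(w, T)\<close> with \<open>T\<close> an \<open>s\<close>-subset
  of \<open>N(w) \<inter> U\<close>, \<open>K\<^sub>s\<^sub>,\<^sub>s\<close>-freeness gives \<open>\<Sum>\<^sub>w (x\<^sub>w choose s) \<le> (s - 1) (k choose s)\<close>,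
  whereas convexity of \<open>x choose s\<close> gives \<open>\<Sum>\<^sub>w (x\<^sub>w choose s) \<ge> n (2k/(ts))\<^sup>s\<close>.
  Hence \<open>n 2\<^sup>s \<le> (s - 1) (ts)\<^sup>s \<le> (s - 1) d \<le> (s - 1) n\<close>, which is absurd.\<close>

lemma sum_card_filter_swap:
  assumes "finite A" "finite B"
  shows "(\<Sum>a\<in>A. card {b \<in> B. R a b}) = (\<Sum>b\<in>B. card {a \<in> A. R a b})"
proof -
  have "(\<Sum>a\<in>A. card {b \<in> B. R a b}) = (\<Sum>a\<in>A. \<Sum>b\<in>B. of_bool (R a b))"
    using assms by (simp add: Collect_conj_eq Int_commute)
  also have "\<dots> = (\<Sum>b\<in>B. \<Sum>a\<in>A. of_bool (R a b))"
    by (rule sum.swap)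
  also have "\<dots> = (\<Sum>b\<in>B. card {a \<in> A. R a b})"
    using assms by (simp add: Collect_conj_eq Int_commute)
  finally show ?thesis .
qed

lemma sum_card_nbhd_Int_commute:
  assumes "simple_graph V E" "A \<subseteq> V" "B \<subseteq> V"
  shows "(\<Sum>a\<in>A. card (nbhd V E a \<inter> B)) = (\<Sum>b\<in>B. card (nbhd V E b \<inter> A))"
proof -
  have fin: "finite A" "finite B"
    using assms(1) finite_subset[OF assms(2)] finite_subset[OF assms(3)]
    unfolding simple_graph_def by auto
  have "nbhd V E x \<inter> Y = {y \<in> Y. E x y}" if "Y \<subseteq> V" for x Y
    using that unfolding nbhd_def by auto
  moreover have "{a \<in> A. E a b} = {a \<in> A. E b a}" for b
    using assms(1) unfolding simple_graph_def by blast
  ultimately show ?thesis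
    using sum_card_filter_swap[OF fin, of E] assms(2,3) by simp
qed

lemma Kss_free_card_common_nbhd_less:
  assumes "simple_graph V E" "Kss_free V E s" "T \<subseteq> V" "card T = s"
  shows "card {w \<in> V. T \<subseteq> nbhd V E w} < s"
proof (rule ccontr)
  assume "\<not> ?thesis"
  then obtain B where B: "B \<subseteq> {w \<in> V. T \<subseteq> nbhd V E w}" "card B = s"
    by (meson not_less obtain_subset_with_card_n)
  have "T \<inter> B = {}" and "\<forall>a\<in>T. \<forall>b\<in>B. E a b"
    using B assms(1) unfolding nbhd_def simple_graph_def by blast+
  with B assms(3,4) have "contains_Kss V E s"
    unfolding contains_Kss_def by blast
  with assms(2) show False
    unfolding Kss_free_def by simp
qed

lemma Kss_free_sum_choose_card_nbhd_le:
  assumes "simple_graph V E" "Kss_free V E s" "A \<subseteq> V" "U \<subseteq> V"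
  shows "(\<Sum>w\<in>A. card (nbhd V E w \<inter> U) choose s) \<le> (s - 1) * (card U choose s)"
proof -
  define P where "P = {T. T \<subseteq> U \<and> card T = s}"
  have fin: "finite V" "finite A" "finite U"
    using assms(1) finite_subset[OF assms(3)] finite_subset[OF assms(4)]
    unfolding simple_graph_def by auto
  hence finP: "finite P"
    unfolding P_def by simp
  have "card (nbhd V E w \<inter> U) choose s = card {T \<in> P. T \<subseteq> nbhd V E w}" for w
  proof -
    have "{T \<in> P. T \<subseteq> nbhd V E w} = {T. T \<subseteq> nbhd V E w \<inter> U \<and> card T = s}"
      unfolding P_def by auto
    thus ?thesis
      using n_subsets[of "nbhd V E w \<inter> U" s] fin(3) by simp
  qed
  hence "(\<Sum>w\<in>A. card (nbhd V E w \<inter> U) choose s) = (\<Sum>T\<in>P. card {w \<in> A. T \<subseteq> nbhd V E w})"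
    using sum_card_filter_swap[OF fin(2) finP] by simp
  also have "\<dots> \<le> (\<Sum>T\<in>P. s - 1)"
  proof (rule sum_mono)
    fix T assume T: "T \<in> P"
    have "card {w \<in> A. T \<subseteq> nbhd V E w} \<le> card {w \<in> V. T \<subseteq> nbhd V E w}"
      using assms(3) fin(1) by (intro card_mono) auto
    also have "\<dots> < s"
      using T assms(1,2,4) unfolding P_def by (intro Kss_free_card_common_nbhd_less) auto
    finally show "card {w \<in> A. T \<subseteq> nbhd V E w} \<le> s - 1" by simp
  qed
  also have "\<dots> = (s - 1) * (card U choose s)"
    using n_subsets[OF fin(3)] unfolding P_def by simp
  finally show ?thesis .
qed

lemma binomial_ge_linear_minorant:
  fixes x s :: nat and b :: real
  assumes "s \<ge> 1" "b \<ge> real s"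
  shows "(b / s) ^ (s - 1) / s * (real x - b) \<le> real (x choose s)"
proof (cases "real x \<ge> b")
  case False
  have "(b / s) ^ (s - 1) / s * (real x - b) \<le> 0"
    using False assms by (intro mult_nonneg_nonpos) auto
  thus ?thesis
    by (meson of_nat_0_le_iff order.trans)
next
  case True
  hence "s \<le> x"
    using assms by linarith
  have "(b / s) ^ (s - 1) / s * (real x - b) \<le> (b / s) ^ (s - 1) * (real x / s)"
    using assms by (simp add: field_simps)
  also have "\<dots> \<le> (real x / s) ^ (s - 1) * (real x / s)"
    using True assms by (intro mult_right_mono power_mono divide_right_mono) auto
  also have "\<dots> = (real x / s) ^ s"
    using assms by (metis Suc_pred' less_eq_Suc_le One_nat_def power_Suc2)
  also have "\<dots> \<le> real (x choose s)"
    using binomial_ge_n_over_k_pow_k[OF \<open>s \<le> x\<close>] by simp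
  finally show ?thesis .
qed

lemma sum_binomial_ge_of_sum_ge:
  fixes x :: "'b \<Rightarrow> nat" and b :: real
  assumes "s \<ge> 1" "b \<ge> real s" "2 * b * real (card A) \<le> (\<Sum>w\<in>A. real (x w))"
  shows "real (card A) * (b / s) ^ s \<le> (\<Sum>w\<in>A. real (x w choose s))"
proof -
  define c where "c = (b / s) ^ (s - 1) / s"
  have "c \<ge> 0"
    using assms unfolding c_def by simp
  have "real (card A) * (b / s) ^ s = c * (real (card A) * b)"
    using assms(1) unfolding c_def
    by (cases s) (auto simp: field_simps)
  also have "\<dots> \<le> c * ((\<Sum>w\<in>A. real (x w)) - real (card A) * b)"
    using assms(3) \<open>c \<ge> 0\<close> by (intro mult_left_mono) auto
  also have "\<dots> = (\<Sum>w\<in>A. c * (real (x w) - b))"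
    by (simp add: sum_distrib_left sum_subtractf algebra_simps)
  also have "\<dots> \<le> (\<Sum>w\<in>A. real (x w choose s))"
    unfolding c_def using assms(1,2) by (intro sum_mono binomial_ge_linear_minorant)
  finally show ?thesis .
qed

lemma Kss_free_card_nbhd_pow_le:
  assumes "simple_graph V E" "Kss_free V E s" "N \<subseteq> V" "U \<subseteq> V"
    and "s \<ge> 1" "b \<ge> real s"
    and "2 * b * real (card N) \<le> (\<Sum>u\<in>U. real (card (nbhd V E u \<inter> N)))"
  shows "real (card N) * (b / s) ^ s \<le> real (s - 1) * real (card U choose s)"
proof -
  have "2 * b * real (card N) \<le> (\<Sum>w\<in>N. real (card (nbhd V E w \<inter> U)))"
    using assms(7) sum_card_nbhd_Int_commute[OF assms(1,4,3)] by (metis of_nat_sum)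
  hence "real (card N) * (b / s) ^ s \<le> (\<Sum>w\<in>N. real (card (nbhd V E w \<inter> U) choose s))"
    using assms(5,6) by (intro sum_binomial_ge_of_sum_ge)
  also have "\<dots> \<le> real (s - 1) * real (card U choose s)"
    using Kss_free_sum_choose_card_nbhd_le[OF assms(1-4)] by (metis of_nat_le_iff of_nat_mult of_nat_sum)
  finally show ?thesis .
qed

lemma pred_mult_choose_less_pow:
  fixes n k s :: nat and t :: real
  assumes "s \<ge> 2" "s \<le> k" "t \<ge> 1" "(t * s) ^ s \<le> real n"
  shows "real (s - 1) * real (k choose s) < real n * (2 * real k / t / s) ^ s"
proof -
  have "(t * s) ^ s > 0"
    using assms(1,3) by simp
  have "real (s - 1) < 2 ^ s"
    using less_exp[of s] by (metis diff_le_self le_less_trans of_nat_less_iff of_nat_numeral of_nat_power)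
  hence "real (s - 1) * (t * s) ^ s < 2 ^ s * (t * s) ^ s"
    using \<open>(t * s) ^ s > 0\<close> by simp
  also have "\<dots> \<le> 2 ^ s * real n"
    using assms(4) by simp
  finally have lt: "real (s - 1) < real n * 2 ^ s / (t * s) ^ s"
    using \<open>(t * s) ^ s > 0\<close> by (simp add: field_simps)
  have "real (s - 1) * real (k choose s) \<le> real (s - 1) * real k ^ s"
    using binomial_le_pow[OF assms(2)] by (intro mult_left_mono) (auto simp flip: of_nat_power)
  also have "\<dots> < real n * 2 ^ s / (t * s) ^ s * real k ^ s"
    using lt assms(1,2) by (intro mult_strict_right_mono) auto
  also have "\<dots> = real n * (2 * real k / t / s) ^ s"
    by (simp add: power_divide power_mult_distrib)
  finally show ?thesis .
qed

theorem lemma2p1: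
  fixes V :: "'a set" and E :: "'a \<Rightarrow> 'a \<Rightarrow> bool" and d s :: nat and t :: real and v :: 'a
  assumes "d \<ge> 2" and "s \<ge> 2"
    and "t \<ge> 1" and "t \<le> root s (real d) / real s"
    and "simple_graph V E" and "Kss_free V E s" and "min_degree_ge V E d"
    and "v \<in> V"
  shows "real (card {u \<in> V. real (card (nbhd V E u \<inter> nbhd V E v))
                              \<ge> (4 / t) * real (card (nbhd V E v))}) < real s * t"
proof (rule ccontr)
  define N where "N = nbhd V E v"
  define U where "U = {u \<in> V. real (card (nbhd V E u \<inter> N)) \<ge> (4 / t) * real (card N)}"
  assume "\<not> ?thesis"
  hence "real s * 1 \<le> real (card U)" "real s * t \<le> real (card U)"
    using mult_left_mono[OF \<open>t \<ge> 1\<close>, of "real s"] unfolding U_def N_def by simp_all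
  hence "s \<le> card U" and b_ge: "real s \<le> 2 * real (card U) / t"
    using \<open>t \<ge> 1\<close> by (auto simp: field_simps)
  have "N \<subseteq> V" "U \<subseteq> V"
    unfolding N_def U_def nbhd_def by auto
  have "2 * (2 * real (card U) / t) * real (card N) = (\<Sum>u\<in>U. (4 / t) * real (card N))"
    by simp
  also have "\<dots> \<le> (\<Sum>u\<in>U. real (card (nbhd V E u \<inter> N)))"
    by (rule sum_mono) (simp add: U_def)
  finally have deg: "2 * (2 * real (card U) / t) * real (card N)
      \<le> (\<Sum>u\<in>U. real (card (nbhd V E u \<inter> N)))" .
  have "(t * s) ^ s \<le> real (card N)"
  proof -
    have "(t * s) ^ s \<le> root s (real d) ^ s"
      using assms(2-4) by (intro power_mono) (auto simp: field_simps)
    also have "\<dots> \<le> real (card N)"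
      using assms(2,7,8) unfolding min_degree_ge_def N_def by simp
    finally show ?thesis .
  qed
  hence "real (s - 1) * real (card U choose s) < real (card N) * (2 * real (card U) / t / s) ^ s"
    using pred_mult_choose_less_pow \<open>s \<ge> 2\<close> \<open>s \<le> card U\<close> \<open>t \<ge> 1\<close> by blast
  moreover have "real (card N) * (2 * real (card U) / t / s) ^ s \<le> real (s - 1) * real (card U choose s)"
    by (rule Kss_free_card_nbhd_pow_le[OF assms(5,6) \<open>N \<subseteq> V\<close> \<open>U \<subseteq> V\<close> _ b_ge deg])
      (use \<open>s \<ge> 2\<close> in simp)
  ultimately show False
    by linarith
qed

end
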